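(* Let $\Gamma$ be a finite triangle-free simplicial graph containing a $K_{3,3}$ subdivision $\Lambda$, and suppose $\Lambda$ has the minimum number of edges among all $K_{3,3}$ subdivisions $\Lambda''\subseteq\Gamma$ with $B(\Lambda'')\le B(\Lambda)$. Then $\Lambda$ has no bad edge with both endpoints on a single branch of $\Lambda$, and no bad edge connecting two $\Lambda$-non-essential vertices lying on adjacent branches of $\Lambda$.
   Context: A subdivision of a graph $H$ is obtained from $H$ by repeatedly inserting valence-two vertices into edges. For a $K_{3,3}$ subdivision $\Lambda\subseteq\Gamma$, the $\Lambda$-essential vertices are those of valence $3$ in $\Lambda$; other vertices of $\Lambda$ are $\Lambda$-non-essential. A branch of $\Lambda$ is a path in $\Lambda$ between two $\Lambda$-essential vertices with no other $\Lambda$-essential vertex on it; two branches are adjacent if they share an endpoint and disjoint otherwise. A bad edge of $\Lambda$ is an edge of $\Gamma$ not in $\Lambda$ whose endpoints are both vertices of $\Lambda$; $B(\Lambda)$ is the number of bad edges. *)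

theory Defs
  imports Main
begin

definition simple_graph :: "'a set \<Rightarrow> 'a set set \<Rightarrow> bool" where
  "simple_graph V E \<longleftrightarrow> finite V \<and> (\<forall>e\<in>E. \<exists>x y. x \<noteq> y \<and> e = {x, y} \<and> x \<in> V \<and> y \<in> V)"

definition triangle_free :: "'a set set \<Rightarrow> bool" where
  "triangle_free E \<longleftrightarrow> \<not> (\<exists>x y z. {x, y} \<in> E \<and> {y, z} \<in> E \<and> {x, z} \<in> E)"

definition is_path :: "'a set set \<Rightarrow> 'a list \<Rightarrow> bool" where
  "is_path E p \<longleftrightarrow> length p \<ge> 2 \<and> distinct p \<and>
     (\<forall>k. Suc k < length p \<longrightarrow> {p ! k, p ! Suc k} \<in> E)"

definition path_edges :: "'a list \<Rightarrow> 'a set set" where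
  "path_edges p = {{p ! k, p ! Suc k} | k. Suc k < length p}"

text \<open>(VL, EL) is a subdivision of K33: obtained from K33 with parts a 0..2, b 0..2 by
  replacing each edge a i b j with a path P i j; the paths are internally disjoint.\<close>
definition is_K33_subdivision :: "'a set \<Rightarrow> 'a set set \<Rightarrow> bool" where
  "is_K33_subdivision VL EL \<longleftrightarrow>
    (\<exists>(a :: nat \<Rightarrow> 'a) (b :: nat \<Rightarrow> 'a) (P :: nat \<Rightarrow> nat \<Rightarrow> 'a list).
       inj_on a {..<3} \<and> inj_on b {..<3} \<and> a ` {..<3} \<inter> b ` {..<3} = {} \<and>
       (\<forall>i<3. \<forall>j<3. is_path EL (P i j) \<and> hd (P i j) = a i \<and> last (P i j) = b j) \<and>
       (\<forall>i<3. \<forall>j<3. \<forall>i'<3. \<forall>j'<3. (i, j) \<noteq> (i', j') \<longrightarrow>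
            set (P i j) \<inter> set (P i' j') \<subseteq> {a i, b j}) \<and>
       VL = (\<Union>i<3. \<Union>j<3. set (P i j)) \<and>
       EL = (\<Union>i<3. \<Union>j<3. path_edges (P i j)))"

definition K33_subdivision_in :: "'a set \<Rightarrow> 'a set set \<Rightarrow> 'a set \<Rightarrow> 'a set set \<Rightarrow> bool" where
  "K33_subdivision_in V E VL EL \<longleftrightarrow> VL \<subseteq> V \<and> EL \<subseteq> E \<and> is_K33_subdivision VL EL"

definition valence :: "'a set set \<Rightarrow> 'a \<Rightarrow> nat" where
  "valence EL v = card {e \<in> EL. v \<in> e}"

definition essential :: "'a set \<Rightarrow> 'a set set \<Rightarrow> 'a \<Rightarrow> bool" where
  "essential VL EL v \<longleftrightarrow> v \<in> VL \<and> valence EL v = 3"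

definition non_essential :: "'a set \<Rightarrow> 'a set set \<Rightarrow> 'a \<Rightarrow> bool" where
  "non_essential VL EL v \<longleftrightarrow> v \<in> VL \<and> \<not> essential VL EL v"

definition is_branch :: "'a set \<Rightarrow> 'a set set \<Rightarrow> 'a list \<Rightarrow> bool" where
  "is_branch VL EL p \<longleftrightarrow> is_path EL p \<and> essential VL EL (hd p) \<and> essential VL EL (last p) \<and>
     (\<forall>k. 0 < k \<and> Suc k < length p \<longrightarrow> \<not> essential VL EL (p ! k))"

definition adjacent_branches :: "'a list \<Rightarrow> 'a list \<Rightarrow> bool" where
  "adjacent_branches p q \<longleftrightarrow> set p \<noteq> set q \<and> {hd p, last p} \<inter> {hd q, last q} \<noteq> {}"

definition bad_edges :: "'a set set \<Rightarrow> 'a set \<Rightarrow> 'a set set \<Rightarrow> 'a set set" where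
  "bad_edges E VL EL = {e \<in> E. e \<notin> EL \<and> e \<subseteq> VL}"

definition num_bad :: "'a set set \<Rightarrow> 'a set \<Rightarrow> 'a set set \<Rightarrow> nat" where
  "num_bad E VL EL = card (bad_edges E VL EL)"

end

theory Submission
  imports Defs
begin

text \<open>Represent the subdivision by its nine internally disjoint paths \<open>P i j\<close> from \<open>a i\<close> to \<open>b j\<close>.
  Inner vertices of these paths have valence two, so the essential vertices are exactly the
  \<open>a i\<close> and \<open>b j\<close>, and every branch is one of the paths.
  A bad edge of the forbidden kind always yields a \<open>K\<^sub>3\<^sub>,\<^sub>3\<close> subdivision with fewer edges and no
  more bad edges. If both ends lie on one path, the edge short-cuts the segment between them.
  If its ends \<open>u\<close>, \<open>v\<close> are inner vertices of two paths leaving the same \<open>a i\<close>, the essential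
  vertex \<open>a i\<close> is moved to \<open>v\<close>: the legs of the new claw are \<open>v u \<dots> b j\<close>, \<open>v \<dots> b j'\<close> and
  \<open>v \<dots> a i \<dots> b l\<close>, and the segment from \<open>a i\<close> to \<open>u\<close> is dropped. This needs that segment to
  have an inner vertex, for \<open>u\<close> or symmetrically for \<open>v\<close>; if neither has one, \<open>a i u v\<close> is a
  triangle. In each case a segment with at least two edges disappears while only the bad edge is
  added, and every old edge between surviving vertices is kept, so no new bad edge arises.\<close>

section \<open>Edges along a list\<close>

lemma path_edges_Cons_Cons [simp]:
  "path_edges (x # y # xs) = insert {x, y} (path_edges (y # xs))"
proof -
  have "{k. Suc k < length (x # y # xs)} = insert 0 (Suc ` {k. Suc k < length (y # xs)})"
    by (auto simp: image_iff less_Suc_eq_0_disj)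
  then show ?thesis
    by (simp add: path_edges_def setcompr_eq_image image_image)
qed

lemma path_edges_Nil [simp]: "path_edges [] = {}"
  and path_edges_singleton [simp]: "path_edges [x] = {}"
  by (simp_all add: path_edges_def)

lemma path_edges_Cons:
  "path_edges (x # xs) = (if xs = [] then {} else insert {x, hd xs} (path_edges xs))"
  by (cases xs) auto

lemma path_edges_append:
  "path_edges (xs @ ys) =
     path_edges xs \<union> path_edges ys \<union> (if xs \<noteq> [] \<and> ys \<noteq> [] then {{last xs, hd ys}} else {})"
  by (induction xs rule: induct_list012) (auto simp: path_edges_Cons)

lemma path_edges_split:
  "path_edges (xs @ y # ys) = path_edges (xs @ [y]) \<union> path_edges (y # ys)"
  by (simp add: path_edges_append path_edges_Cons)

lemma path_edges_infix: "path_edges ys \<subseteq> path_edges (xs @ ys @ zs)"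
  by (simp add: path_edges_append) blast

lemma path_edges_rev [simp]: "path_edges (rev xs) = path_edges xs"
  by (induction xs) (auto simp: path_edges_append path_edges_Cons last_rev insert_commute)

lemma path_edges_subset_set: "f \<in> path_edges xs \<Longrightarrow> f \<subseteq> set xs"
  by (induction xs rule: induct_list012) auto

lemma finite_path_edges [simp]: "finite (path_edges xs)"
  by (induction xs rule: induct_list012) auto

lemma is_path_iff: "is_path E p \<longleftrightarrow> 2 \<le> length p \<and> distinct p \<and> path_edges p \<subseteq> E"
  unfolding is_path_def path_edges_def by blast

lemma path_edges_meet_inner:
  "M \<noteq> [] \<Longrightarrow> f \<in> path_edges (x # M @ [y]) \<Longrightarrow> f \<inter> set M \<noteq> {}"
  by (induction M arbitrary: x rule: induct_list012) auto

lemma path_edges_at_nth: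
  assumes "distinct xs" "k < length xs" "f \<in> path_edges xs" "xs ! k \<in> f"
  shows "(0 < k \<and> f = {xs ! (k - 1), xs ! k}) \<or> (Suc k < length xs \<and> f = {xs ! k, xs ! Suc k})"
proof -
  obtain m where m: "Suc m < length xs" "f = {xs ! m, xs ! Suc m}"
    using assms(3) unfolding path_edges_def by blast
  then have "k = m \<or> k = Suc m"
    using assms by (auto simp: nth_eq_iff_index_eq)
  then show ?thesis using m by auto
qed

lemma path_follows_forced_path:
  assumes p: "is_path E p" and q: "distinct q" "2 \<le> length q"
    and start: "p ! 0 = q ! 0" "p ! 1 = q ! 1"
    and forced: "\<And>k f. \<lbrakk>0 < k; Suc k < length q; f \<in> E; q ! k \<in> f\<rbrakk>
                   \<Longrightarrow> f = {q ! (k - 1), q ! k} \<or> f = {q ! k, q ! Suc k}"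
    and avoids_end: "\<And>k. \<lbrakk>0 < k; Suc k < length p\<rbrakk> \<Longrightarrow> p ! k \<noteq> last q"
  shows "length p \<le> length q \<and> (\<forall>k < length p. p ! k = q ! k)"
proof -
  have dp: "distinct p" and lp: "2 \<le> length p"
    and step: "\<And>k. Suc k < length p \<Longrightarrow> {p ! k, p ! Suc k} \<in> E"
    using p unfolding is_path_def by auto
  have agree: "Suc k < length q \<and> p ! k = q ! k \<and> p ! Suc k = q ! Suc k" if "Suc k < length p" for k
    using that
  proof (induction k)
    case 0
    then show ?case using q(2) start by simp
  next
    case (Suc k)
    then have IH: "Suc k < length q" "p ! k = q ! k" "p ! Suc k = q ! Suc k" by simp_all
    have "p ! Suc k \<noteq> last q" using avoids_end[of "Suc k"] Suc.prems by simp
    then have long: "Suc (Suc k) < length q"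
      using IH by (metis Suc_lessI diff_Suc_1 last_conv_nth list.size(3) not_less_zero)
    have "{q ! Suc k, p ! Suc (Suc k)} \<in> E" using step[OF Suc.prems] IH(3) by simp
    then have "{q ! Suc k, p ! Suc (Suc k)} = {q ! k, q ! Suc k} \<or>
               {q ! Suc k, p ! Suc (Suc k)} = {q ! Suc k, q ! Suc (Suc k)}"
      using forced[of "Suc k"] long by simp
    moreover have "p ! Suc (Suc k) \<noteq> p ! k" "p ! Suc (Suc k) \<noteq> p ! Suc k"
      using Suc.prems nth_eq_iff_index_eq[OF dp, of "Suc (Suc k)"] by auto
    ultimately have "p ! Suc (Suc k) = q ! Suc (Suc k)" using IH by (auto simp: doubleton_eq_iff)
    then show ?case using long IH by simp
  qed
  have "Suc (length p - 2) < length p" "Suc (length p - 2) = length p - 1" using lp by arith+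
  then have "length p - 1 < length q" using agree[of "length p - 2"] by simp
  moreover have "p ! k = q ! k" if "k < length p" for k
    using that agree[of "k - 1"] start(1) by (cases k) auto
  ultimately show ?thesis by auto
qed

lemma split_list_pair:
  assumes "x \<in> set xs" "y \<in> set xs" "x \<noteq> y"
  shows "\<exists>A M B. xs = A @ x # M @ y # B \<or> xs = A @ y # M @ x # B"
proof -
  obtain A R where xs: "xs = A @ x # R" using assms(1) by (meson split_list)
  then consider "y \<in> set R" | "y \<in> set A" using assms(2,3) by auto
  then show ?thesis
  proof cases
    case 1
    then obtain M B where "R = M @ y # B" by (meson split_list)
    then show ?thesis using xs by blast
  next
    case 2
    then obtain A' M where "A = A' @ y # M" by (meson split_list)
    then show ?thesis using xs by auto
  qed
qed

section \<open>\<open>K\<^sub>3\<^sub>,\<^sub>3\<close> subdivisions as nine paths\<close>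

definition frame_vertices :: "(nat \<Rightarrow> nat \<Rightarrow> 'a list) \<Rightarrow> 'a set" where
  "frame_vertices P = (\<Union>i<3. \<Union>j<3. set (P i j))"

definition frame_edges :: "(nat \<Rightarrow> nat \<Rightarrow> 'a list) \<Rightarrow> 'a set set" where
  "frame_edges P = (\<Union>i<3. \<Union>j<3. path_edges (P i j))"

lemma frame_edges_replace_row_subset:
  assumes "i < 3" "(\<Union>l<3. path_edges (R l)) \<subseteq> insert e (\<Union>l<3. path_edges (P i l))"
  shows "frame_edges (P(i := R)) \<subseteq> insert e (frame_edges P)"
proof -
  have "(\<Union>l<3. path_edges (P i l)) \<subseteq> frame_edges P"
    using assms(1) unfolding frame_edges_def by blast
  then have "path_edges ((P(i := R)) k l) \<subseteq> insert e (frame_edges P)" if "k < 3" "l < 3" for k l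
  proof (cases "k = i")
    case True
    then show ?thesis using assms(2) \<open>_ \<subseteq> frame_edges P\<close> that(2) by fastforce
  next
    case False
    then show ?thesis using that unfolding frame_edges_def by auto
  qed
  then show ?thesis unfolding frame_edges_def by blast
qed

lemma frame_edges_subset_replace_row:
  assumes "i < 3" "(\<Union>l<3. path_edges (P i l)) \<subseteq> (\<Union>l<3. path_edges (R l)) \<union> S"
  shows "frame_edges P \<subseteq> frame_edges (P(i := R)) \<union> S"
proof -
  have "path_edges (R l) = path_edges ((P(i := R)) i l)" for l by simp
  then have "(\<Union>l<3. path_edges (R l)) \<subseteq> frame_edges (P(i := R))"
    using assms(1) unfolding frame_edges_def by blast
  then have "path_edges (P k l) \<subseteq> frame_edges (P(i := R)) \<union> S" if "k < 3" "l < 3" for k l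
  proof (cases "k = i")
    case True
    then show ?thesis using assms(2) \<open>_ \<subseteq> frame_edges (P(i := R))\<close> that(2) by blast
  next
    case False
    then have "path_edges (P k l) = path_edges ((P(i := R)) k l)" by simp
    then show ?thesis using that unfolding frame_edges_def by blast
  qed
  then show ?thesis unfolding frame_edges_def by blast
qed

locale K33_frame =
  fixes a b :: "nat \<Rightarrow> 'a" and P :: "nat \<Rightarrow> nat \<Rightarrow> 'a list" and VL :: "'a set" and EL :: "'a set set"
  assumes a_inj: "\<lbrakk>i < 3; i' < 3; a i = a i'\<rbrakk> \<Longrightarrow> i = i'"
    and b_inj: "\<lbrakk>j < 3; j' < 3; b j = b j'\<rbrakk> \<Longrightarrow> j = j'"
    and a_neq_b: "\<lbrakk>i < 3; j < 3\<rbrakk> \<Longrightarrow> a i \<noteq> b j"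
    and length_path: "\<lbrakk>i < 3; j < 3\<rbrakk> \<Longrightarrow> 2 \<le> length (P i j)"
    and distinct_path: "\<lbrakk>i < 3; j < 3\<rbrakk> \<Longrightarrow> distinct (P i j)"
    and hd_path: "\<lbrakk>i < 3; j < 3\<rbrakk> \<Longrightarrow> hd (P i j) = a i"
    and last_path: "\<lbrakk>i < 3; j < 3\<rbrakk> \<Longrightarrow> last (P i j) = b j"
    and paths_meet: "\<lbrakk>i < 3; j < 3; i' < 3; j' < 3; (i, j) \<noteq> (i', j')\<rbrakk>
        \<Longrightarrow> set (P i j) \<inter> set (P i' j') \<subseteq> {a i, b j}"
    and VL_eq: "VL = frame_vertices P"
    and EL_eq: "EL = frame_edges P"

lemma is_K33_subdivision_iff:
  "is_K33_subdivision VL EL \<longleftrightarrow> (\<exists>a b P. K33_frame a b P VL EL)"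
proof
  assume "is_K33_subdivision VL EL"
  then obtain a b :: "nat \<Rightarrow> 'a" and P where
    "inj_on a {..<3}" "inj_on b {..<3}" "a ` {..<3} \<inter> b ` {..<3} = {}"
    "\<forall>i<3. \<forall>j<3. is_path EL (P i j) \<and> hd (P i j) = a i \<and> last (P i j) = b j"
    "\<forall>i<3. \<forall>j<3. \<forall>i'<3. \<forall>j'<3. (i, j) \<noteq> (i', j') \<longrightarrow> set (P i j) \<inter> set (P i' j') \<subseteq> {a i, b j}"
    "VL = frame_vertices P" "EL = frame_edges P"
    unfolding is_K33_subdivision_def frame_vertices_def frame_edges_def by blast
  then have "K33_frame a b P VL EL"
    by unfold_locales (auto simp: is_path_iff dest: inj_onD)
  then show "\<exists>a b P. K33_frame a b P VL EL" by blast
next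
  assume "\<exists>a b P. K33_frame a b P VL EL"
  then obtain a b P where "K33_frame a b P VL EL" by blast
  then interpret K33_frame a b P VL EL .
  show "is_K33_subdivision VL EL"
    unfolding is_K33_subdivision_def
  proof (intro exI conjI)
    show "inj_on a {..<3}" by (auto intro: inj_onI a_inj)
    show "inj_on b {..<3}" by (auto intro: inj_onI b_inj)
    show "a ` {..<3} \<inter> b ` {..<3} = {}" using a_neq_b by auto
    show "\<forall>i<3. \<forall>j<3. is_path EL (P i j) \<and> hd (P i j) = a i \<and> last (P i j) = b j"
      using length_path distinct_path hd_path last_path
      by (auto simp: is_path_iff EL_eq frame_edges_def)
  qed (use paths_meet VL_eq EL_eq in \<open>auto simp: frame_vertices_def frame_edges_def\<close>)
qed

context K33_frame
begin

lemma path_ne: "\<lbrakk>i < 3; j < 3\<rbrakk> \<Longrightarrow> P i j \<noteq> []"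
  using length_path by fastforce

lemma nth_0_path: "\<lbrakk>i < 3; j < 3\<rbrakk> \<Longrightarrow> P i j ! 0 = a i"
  using hd_path path_ne by (metis hd_conv_nth)

lemma nth_last_path: "\<lbrakk>i < 3; j < 3\<rbrakk> \<Longrightarrow> P i j ! (length (P i j) - 1) = b j"
  using last_path path_ne by (metis last_conv_nth)

lemma a_in_path: "\<lbrakk>i < 3; j < 3\<rbrakk> \<Longrightarrow> a i \<in> set (P i j)"
  using hd_path path_ne by (metis hd_in_set)

lemma b_in_path: "\<lbrakk>i < 3; j < 3\<rbrakk> \<Longrightarrow> b j \<in> set (P i j)"
  using last_path path_ne by (metis last_in_set)

lemma set_path_subset_VL: "\<lbrakk>i < 3; j < 3\<rbrakk> \<Longrightarrow> set (P i j) \<subseteq> VL"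
  by (auto simp: VL_eq frame_vertices_def)

lemma path_edges_subset_EL: "\<lbrakk>i < 3; j < 3\<rbrakk> \<Longrightarrow> path_edges (P i j) \<subseteq> EL"
  by (auto simp: EL_eq frame_edges_def)

lemma edge_on_path:
  assumes "f \<in> EL" obtains i j where "i < 3" "j < 3" "f \<in> path_edges (P i j)"
  using assms by (auto simp: EL_eq frame_edges_def)

lemma edge_subset_VL: "f \<in> EL \<Longrightarrow> f \<subseteq> VL"
  by (meson edge_on_path path_edges_subset_set set_path_subset_VL order_trans)

lemma finite_VL: "finite VL"
  by (simp add: VL_eq frame_vertices_def)

lemma finite_EL: "finite EL"
  by (simp add: EL_eq frame_edges_def)

lemma paths_meet_ends:
  "\<lbrakk>i < 3; j < 3; i' < 3; j' < 3; (i, j) \<noteq> (i', j')\<rbrakk>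
    \<Longrightarrow> set (P i j) \<inter> set (P i' j') \<subseteq> {a i, b j} \<inter> {a i', b j'}"
  using paths_meet[of i j i' j'] paths_meet[of i' j' i j] by blast

lemma same_row_meet:
  "\<lbrakk>i < 3; l < 3; l' < 3; l \<noteq> l'\<rbrakk> \<Longrightarrow> set (P i l) \<inter> set (P i l') \<subseteq> {a i}"
  using paths_meet_ends[of i l i l'] b_inj[of l l'] a_neq_b by auto

lemma other_row_meet:
  "\<lbrakk>i < 3; k < 3; l < 3; l' < 3; k \<noteq> i\<rbrakk> \<Longrightarrow> set (P i l) \<inter> set (P k l') \<subseteq> {b l} \<inter> {b l'}"
  using paths_meet_ends[of i l k l'] a_inj[of i k] a_neq_b by auto

lemma inner_vertex_on_one_path:
  "\<lbrakk>i < 3; j < 3; k < 3; l < 3; (k, l) \<noteq> (i, j); x \<in> set (P i j); x \<noteq> a i; x \<noteq> b j\<rbrakk>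
    \<Longrightarrow> x \<notin> set (P k l)"
  using paths_meet[of i j k l] by blast

lemma path_eq_Cons_tl: "\<lbrakk>i < 3; l < 3\<rbrakk> \<Longrightarrow> P i l = a i # tl (P i l)"
  using hd_path path_ne by (metis list.collapse)

lemma set_path_eq_insert_tl: "\<lbrakk>i < 3; l < 3\<rbrakk> \<Longrightarrow> set (P i l) = insert (a i) (set (tl (P i l)))"
  using path_eq_Cons_tl by (metis list.simps(15))

lemma a_notin_tl_path: "\<lbrakk>i < 3; l < 3\<rbrakk> \<Longrightarrow> a i \<notin> set (tl (P i l))"
  using distinct_path path_eq_Cons_tl by (metis distinct.simps(2))

lemma row_tails_disjoint:
  "\<lbrakk>i < 3; l < 3; l' < 3; l \<noteq> l'\<rbrakk> \<Longrightarrow> set (tl (P i l)) \<inter> set (tl (P i l')) = {}"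
  using same_row_meet set_path_eq_insert_tl a_notin_tl_path by blast

lemma transpose: "K33_frame b a (\<lambda>i j. rev (P j i)) VL EL"
proof
  show "VL = frame_vertices (\<lambda>i j. rev (P j i))"
    by (auto simp: VL_eq frame_vertices_def)
  show "EL = frame_edges (\<lambda>i j. rev (P j i))"
    by (auto simp: EL_eq frame_edges_def)
  show "set (rev (P j i)) \<inter> set (rev (P j' i')) \<subseteq> {b i, a j}"
    if "i < 3" "j < 3" "i' < 3" "j' < 3" "(i, j) \<noteq> (i', j')" for i j i' j'
    using that paths_meet[of j i j' i'] by auto
qed (use a_inj b_inj a_neq_b length_path distinct_path hd_path last_path in
     \<open>auto simp: hd_rev last_rev dest: a_neq_b[symmetric]\<close>)

lemma edge_at_inner_vertex:
  assumes ij: "i < 3" "j < 3" and k: "0 < k" "Suc k < length (P i j)"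
    and f: "f \<in> EL" "P i j ! k \<in> f"
  shows "f = {P i j ! (k - 1), P i j ! k} \<or> f = {P i j ! k, P i j ! Suc k}"
proof -
  obtain i' j' where i'j': "i' < 3" "j' < 3" "f \<in> path_edges (P i' j')"
    using f(1) by (rule edge_on_path)
  have "P i j ! k \<noteq> P i j ! 0" "P i j ! k \<noteq> P i j ! (length (P i j) - 1)"
    using k nth_eq_iff_index_eq[OF distinct_path[OF ij], of k 0]
      nth_eq_iff_index_eq[OF distinct_path[OF ij], of k "length (P i j) - 1"] by fastforce+
  then have "P i j ! k \<noteq> a i" "P i j ! k \<noteq> b j"
    using nth_0_path[OF ij] nth_last_path[OF ij] by metis+
  then have "(i', j') = (i, j)"
    using inner_vertex_on_one_path[OF ij i'j'(1,2)] path_edges_subset_set[OF i'j'(3)] f(2) k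
    by fastforce
  then show ?thesis
    using path_edges_at_nth[OF distinct_path[OF ij], of k f] i'j'(3) f(2) k by auto
qed

lemma inner_not_essential:
  assumes "i < 3" "j < 3" "0 < k" "Suc k < length (P i j)"
  shows "\<not> essential VL EL (P i j ! k)"
proof -
  have "{f \<in> EL. P i j ! k \<in> f} \<subseteq> {{P i j ! (k - 1), P i j ! k}, {P i j ! k, P i j ! Suc k}}"
    using edge_at_inner_vertex[OF assms] by blast
  then have "valence EL (P i j ! k) \<le> card {{P i j ! (k - 1), P i j ! k}, {P i j ! k, P i j ! Suc k}}"
    unfolding valence_def by (rule card_mono[rotated]) simp
  also have "\<dots> \<le> 2"
    by (rule card_insert_le_m1) auto
  finally show ?thesis unfolding essential_def by simp
qed

lemma edge_at_a:
  assumes i: "i < 3" and f: "f \<in> EL" "a i \<in> f"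
  shows "\<exists>l<3. f = {a i, P i l ! 1}"
proof -
  obtain k l where kl: "k < 3" "l < 3" "f \<in> path_edges (P k l)"
    using f(1) by (rule edge_on_path)
  have "a i \<in> set (P k l)" using path_edges_subset_set[OF kl(3)] f(2) by blast
  then have "k = i"
    using other_row_meet[OF i kl(1) kl(2) kl(2)] a_in_path[OF i kl(2)] a_neq_b[OF i kl(2)] by blast
  then show ?thesis
    using path_edges_at_nth[OF distinct_path[OF i kl(2)], of 0 f] kl f(2) nth_0_path[OF i kl(2)]
      path_ne[OF i kl(2)] by auto
qed

lemma valence_a:
  assumes i: "i < 3" shows "valence EL (a i) = 3"
proof -
  have second: "P i l ! 1 \<in> set (P i l) - {a i}" if "l < 3" for l
  proof -
    have "P i l ! 1 \<noteq> P i l ! 0"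
      using length_path[OF i that] nth_eq_iff_index_eq[OF distinct_path[OF i that], of 1 0] by fastforce
    then show ?thesis using length_path[OF i that] nth_0_path[OF i that] by auto
  qed
  have "{f \<in> EL. a i \<in> f} = (\<lambda>l. {a i, P i l ! 1}) ` {..<3}"
  proof (intro equalityI subsetI)
    fix f assume "f \<in> (\<lambda>l. {a i, P i l ! 1}) ` {..<3}"
    then obtain l where l: "l < 3" "f = {a i, P i l ! 1}" by auto
    have "Suc 0 < length (P i l)" using length_path[OF i l(1)] by simp
    then have "f \<in> path_edges (P i l)"
      using l nth_0_path[OF i l(1)] unfolding path_edges_def by force
    then show "f \<in> {f \<in> EL. a i \<in> f}" using path_edges_subset_EL[OF i l(1)] l by auto
  qed (use edge_at_a[OF i] in auto)
  moreover have "inj_on (\<lambda>l. {a i, P i l ! 1}) {..<3}"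
  proof (rule inj_onI)
    fix l l' assume l: "l \<in> {..<3}" "l' \<in> {..<3}" and eq: "{a i, P i l ! 1} = {a i, P i l' ! 1}"
    then have "P i l ! 1 = P i l' ! 1" using second by (metis Diff_iff doubleton_eq_iff insertI1 lessThan_iff)
    then show "l = l'" using same_row_meet[OF i, of l l'] second l by fastforce
  qed
  ultimately show ?thesis unfolding valence_def by (simp add: card_image)
qed

lemma essential_a: "i < 3 \<Longrightarrow> essential VL EL (a i)"
  unfolding essential_def using valence_a a_in_path[of i 0] set_path_subset_VL[of i 0] by auto

lemma essential_b: "j < 3 \<Longrightarrow> essential VL EL (b j)"
proof -
  interpret transposed: K33_frame b a "\<lambda>i j. rev (P j i)" VL EL by (rule transpose)
  show "j < 3 \<Longrightarrow> essential VL EL (b j)" by (rule transposed.essential_a)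
qed

lemma essential_cases:
  assumes "essential VL EL v" shows "(\<exists>i<3. v = a i) \<or> (\<exists>j<3. v = b j)"
proof -
  obtain i j where ij: "i < 3" "j < 3" "v \<in> set (P i j)"
    using assms by (auto simp: essential_def VL_eq frame_vertices_def)
  then obtain k where k: "k < length (P i j)" "v = P i j ! k" by (metis in_set_conv_nth)
  then consider "k = 0" | "k = length (P i j) - 1" | "0 < k" "Suc k < length (P i j)" by linarith
  then show ?thesis
    using assms ij k nth_0_path nth_last_path inner_not_essential by cases blast+
qed

lemma branch_from_a:
  assumes br: "is_branch VL EL p" and i: "i < 3" and hd: "hd p = a i"
  shows "\<exists>j<3. p = P i j"
proof -
  have p: "is_path EL p" "2 \<le> length p" "distinct p"
    and last_ess: "essential VL EL (last p)"
    and inner: "\<And>k. \<lbrakk>0 < k; Suc k < length p\<rbrakk> \<Longrightarrow> \<not> essential VL EL (p ! k)"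
    using br unfolding is_branch_def is_path_def by auto
  have p0: "p ! 0 = a i" using hd p(2) by (metis hd_conv_nth list.size(3) not_numeral_le_zero)
  have "{p ! 0, p ! 1} \<in> EL" using p(1) unfolding is_path_def by auto
  then obtain l where l: "l < 3" "{a i, p ! 1} = {a i, P i l ! 1}" using edge_at_a[OF i] p0 by auto
  have "p ! 1 \<noteq> p ! 0" using p(2,3) nth_eq_iff_index_eq[of p 1 0] by fastforce
  then have p1: "p ! 1 = P i l ! 1" using l(2) p0 by (metis doubleton_eq_iff)
  have prefix: "length p \<le> length (P i l) \<and> (\<forall>k < length p. p ! k = P i l ! k)"
  proof (rule path_follows_forced_path[OF p(1) distinct_path[OF i l(1)] length_path[OF i l(1)]])
    show "p ! 0 = P i l ! 0" "p ! 1 = P i l ! 1" using p0 p1 nth_0_path[OF i l(1)] by simp_all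
    show "p ! k \<noteq> last (P i l)" if "0 < k" "Suc k < length p" for k
      using inner[OF that] essential_b[OF l(1)] last_path[OF i l(1)] by auto
  qed (use edge_at_inner_vertex[OF i l(1)] in blast)
  moreover have "\<not> length p < length (P i l)"
  proof
    assume "length p < length (P i l)"
    then have "\<not> essential VL EL (P i l ! (length p - 1))"
      using inner_not_essential[OF i l(1), of "length p - 1"] p(2) by simp
    moreover have "last p = P i l ! (length p - 1)"
      using prefix p(2) last_conv_nth[of p] by fastforce
    ultimately show False using last_ess by simp
  qed
  ultimately have "p = P i l" by (auto intro: nth_equalityI)
  then show ?thesis using l(1) by blast
qed

lemma branch_cases:
  assumes "is_branch VL EL p"
  shows "\<exists>i<3. \<exists>j<3. set p = set (P i j) \<and> {hd p, last p} = {a i, b j}"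
proof -
  interpret transposed: K33_frame b a "\<lambda>i j. rev (P j i)" VL EL by (rule transpose)
  have "essential VL EL (hd p)" using assms unfolding is_branch_def by auto
  then consider (a) i where "i < 3" "hd p = a i" | (b) j where "j < 3" "hd p = b j"
    using essential_cases by blast
  then show ?thesis
  proof cases
    case a
    then show ?thesis using branch_from_a[OF assms] hd_path last_path by fastforce
  next
    case b
    then show ?thesis using transposed.branch_from_a[OF assms] hd_path last_path
      by (fastforce simp: hd_rev last_rev)
  qed
qed

end

section \<open>Subdivisions with fewer edges\<close>

lemma card_less_replace_two_by_one:
  assumes "finite A" "B \<subseteq> insert e (A - {f1, f2})" "f1 \<in> A" "f2 \<in> A" "f1 \<noteq> f2"
  shows "card B < card A"
proof -
  have "card B \<le> card (insert e (A - {f1, f2}))"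
    using assms(1,2) by (simp add: card_mono)
  also have "\<dots> \<le> Suc (card (A - {f1, f2}))"
    by (simp add: card_insert_if assms(1))
  also have "card (A - {f1, f2}) = card A - 2"
    using assms(3-5) by (simp add: card_Diff_subset assms(1))
  finally show ?thesis
    using assms(1,3-5) card_mono[of A "{f1, f2}"] by simp
qed

lemma K33_subdivision_facts:
  assumes "is_K33_subdivision VL EL"
  shows "finite VL" "finite EL" "f \<in> EL \<Longrightarrow> f \<subseteq> VL"
  using assms K33_frame.finite_VL K33_frame.finite_EL K33_frame.edge_subset_VL
  unfolding is_K33_subdivision_iff by metis+

definition better_subdivision ::
    "'a set \<Rightarrow> 'a set set \<Rightarrow> 'a set \<Rightarrow> 'a set set \<Rightarrow> 'a set \<Rightarrow> 'a set set \<Rightarrow> bool" where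
  "better_subdivision V E VL EL VL' EL' \<longleftrightarrow>
     K33_subdivision_in V E VL' EL' \<and> num_bad E VL' EL' \<le> num_bad E VL EL \<and> card EL' < card EL"

lemma better_subdivisionI:
  assumes old: "K33_subdivision_in V E VL EL" and new: "is_K33_subdivision VL' EL'"
    and VL': "VL' \<subseteq> VL" and EL': "EL' \<subseteq> insert e EL" "e \<in> E"
    and S: "distinct (x # M @ [y])" "M \<noteq> []" "path_edges (x # M @ [y]) \<subseteq> EL"
    and dropped: "set M \<inter> VL' = {}"
    and kept: "EL \<subseteq> EL' \<union> path_edges (x # M @ [y])"
  shows "better_subdivision V E VL EL VL' EL'"
proof -
  have old_facts: "VL \<subseteq> V" "EL \<subseteq> E" "finite VL" "finite EL"
    using old K33_subdivision_facts unfolding K33_subdivision_in_def by auto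
  have new_edges: "f \<subseteq> VL'" if "f \<in> EL'" for f
    using K33_subdivision_facts(3)[OF new that] .
  have "K33_subdivision_in V E VL' EL'"
    unfolding K33_subdivision_in_def using new VL' EL' old_facts by auto
  moreover have "bad_edges E VL' EL' \<subseteq> bad_edges E VL EL"
  proof
    fix f assume f: "f \<in> bad_edges E VL' EL'"
    have "f \<notin> path_edges (x # M @ [y])"
      using f path_edges_meet_inner[OF S(2)] dropped unfolding bad_edges_def by blast
    then show "f \<in> bad_edges E VL EL" using f kept VL' unfolding bad_edges_def by blast
  qed
  then have "num_bad E VL' EL' \<le> num_bad E VL EL"
    unfolding num_bad_def bad_edges_def
    by (rule card_mono[rotated]) (rule finite_subset[of _ "Pow VL"], use old_facts(3) in auto)
  moreover have "card EL' < card EL" \<comment> \<open>the two end edges of the dropped segment pay for \<open>e\<close>\<close>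
  proof (rule card_less_replace_two_by_one[OF old_facts(4)])
    have "{x, hd M} \<in> path_edges (x # M @ [y])" using S(2) by (cases M) auto
    moreover have "{last M, y} \<in> path_edges (x # M @ [y])"
      using path_edges_append[of "x # M" "[y]"] S(2) by simp
    ultimately show "{x, hd M} \<in> EL" "{last M, y} \<in> EL" using S(3) by auto
    show "{x, hd M} \<noteq> {last M, y}" using S(1,2) by (auto simp: doubleton_eq_iff)
    have "hd M \<notin> VL'" "last M \<notin> VL'" using dropped hd_in_set last_in_set S(2) by blast+
    then show "EL' \<subseteq> insert e (EL - {{x, hd M}, {last M, y}})"
      using new_edges EL'(1) by blast
  qed
  ultimately show ?thesis unfolding better_subdivision_def by blast
qed

context K33_frame
begin

lemma row_of_non_b_vertex:
  "\<lbrakk>i < 3; k < 3; l < 3; m < 3; x \<in> set (P i m); x \<noteq> b m; x \<in> set (P k l)\<rbrakk> \<Longrightarrow> k = i"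
  using other_row_meet[of i k m l] by blast

text \<open>\<open>R\<close> is a subdivided claw with centre \<open>c\<close> and leaves \<open>b l\<close> built inside row \<open>i\<close>. The last
  condition keeps it away from the other rows, since a vertex of row \<open>i\<close> other than the \<open>b m\<close>
  lies on no other row.\<close>

definition row_replacement :: "nat \<Rightarrow> 'a \<Rightarrow> (nat \<Rightarrow> 'a list) \<Rightarrow> bool" where
  "row_replacement i c R \<longleftrightarrow>
     (\<forall>l<3. distinct (R l) \<and> 2 \<le> length (R l) \<and> hd (R l) = c \<and> last (R l) = b l) \<and>
     (\<forall>l<3. \<forall>l'<3. l \<noteq> l' \<longrightarrow> set (R l) \<inter> set (R l') \<subseteq> {c}) \<and>
     (\<forall>l<3. \<forall>x \<in> set (R l). x = b l \<or> (\<exists>m<3. x \<in> set (P i m) \<and> x \<noteq> b m))"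

lemma row_replacementI:
  assumes "\<And>l. l < 3 \<Longrightarrow> distinct (R l) \<and> 2 \<le> length (R l) \<and> hd (R l) = c \<and> last (R l) = b l"
    and "\<And>l l'. \<lbrakk>l < 3; l' < 3; l \<noteq> l'\<rbrakk> \<Longrightarrow> set (R l) \<inter> set (R l') \<subseteq> {c}"
    and "\<And>l x. \<lbrakk>l < 3; x \<in> set (R l)\<rbrakk> \<Longrightarrow> x = b l \<or> (\<exists>m<3. x \<in> set (P i m) \<and> x \<noteq> b m)"
  shows "row_replacement i c R"
  using assms unfolding row_replacement_def by simp

lemma row_replacement_vertex:
  "\<lbrakk>row_replacement i c R; l < 3; x \<in> set (R l)\<rbrakk> \<Longrightarrow> x = b l \<or> (\<exists>m<3. x \<in> set (P i m) \<and> x \<noteq> b m)"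
  unfolding row_replacement_def by simp

lemma replacement_vertex_off_rows:
  "\<lbrakk>i < 3; row_replacement i c R; l < 3; x \<in> set (R l); k < 3; k \<noteq> i; l' < 3; x \<in> set (P k l')\<rbrakk>
    \<Longrightarrow> x = b l"
  using row_replacement_vertex row_of_non_b_vertex by blast

lemma replacement_centre:
  assumes i: "i < 3" and R: "row_replacement i c R"
  shows "\<lbrakk>k < 3; k \<noteq> i\<rbrakk> \<Longrightarrow> c \<noteq> a k" and "l < 3 \<Longrightarrow> c \<noteq> b l"
proof -
  have c_in: "c \<in> set (R l)" if "l < 3" for l
    using R that hd_in_set[of "R l"] unfolding row_replacement_def by (metis list.size(3) not_numeral_le_zero)
  show "c \<noteq> a k" if "k < 3" "k \<noteq> i"
    using replacement_vertex_off_rows[OF i R, of 0 c k 0] c_in[of 0] a_in_path[of k 0]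
      a_neq_b[of k 0] that by auto
  show "c \<noteq> b l" if l: "l < 3"
  proof
    assume c: "c = b l"
    define l' :: nat where "l' = (if l = 0 then 1 else 0)"
    have l': "l' < 3" "l' \<noteq> l" by (simp_all add: l'_def)
    then consider "c = b l'" | m where "m < 3" "c \<in> set (P i m)" "c \<noteq> b m"
      using row_replacement_vertex[OF R l'(1) c_in[OF l'(1)]] by blast
    then show False
    proof cases
      case 1 then show False using b_inj c l' l by metis
    next
      case 2 then show False
        using same_row_meet[OF i l 2(1)] b_in_path[OF i l] a_neq_b[OF i l] c by (cases "l = m") auto
    qed
  qed
qed

lemma replace_row:
  assumes i: "i < 3" and R: "row_replacement i c R"
  shows "K33_frame (a(i := c)) b (P(i := R)) (frame_vertices (P(i := R))) (frame_edges (P(i := R)))"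
proof -
  have legs: "\<And>l. l < 3 \<Longrightarrow> distinct (R l) \<and> 2 \<le> length (R l) \<and> hd (R l) = c \<and> last (R l) = b l"
    and legs_meet: "\<And>l l'. \<lbrakk>l < 3; l' < 3; l \<noteq> l'\<rbrakk> \<Longrightarrow> set (R l) \<inter> set (R l') \<subseteq> {c}"
    using R unfolding row_replacement_def by blast+
  note off_rows = replacement_vertex_off_rows[OF i R]
  show ?thesis
  proof
    show "(a(i := c)) k = (a(i := c)) k' \<Longrightarrow> k = k'" if "k < 3" "k' < 3" for k k'
      using that a_inj replacement_centre(1)[OF i R] by (cases "k = i"; cases "k' = i") (auto dest: sym)
    show "(a(i := c)) k \<noteq> b l" if "k < 3" "l < 3" for k l
      using that a_neq_b replacement_centre(2)[OF i R] by auto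
    show "set ((P(i := R)) k l) \<inter> set ((P(i := R)) k' l') \<subseteq> {(a(i := c)) k, b l}"
      if kl: "k < 3" "l < 3" "k' < 3" "l' < 3" "(k, l) \<noteq> (k', l')" for k l k' l'
    proof (cases "k = i"; cases "k' = i")
      assume "k \<noteq> i" "k' = i"
      have "b l' \<in> set (P k l) \<Longrightarrow> b l' = b l"
        using paths_meet_ends[of k l k l'] b_in_path[of k l'] a_neq_b[of k l'] kl by (cases "l = l'") auto
      then show ?thesis using off_rows[of l' _ k l] \<open>k \<noteq> i\<close> \<open>k' = i\<close> kl by fastforce
    qed (use kl legs_meet paths_meet off_rows in auto)
  qed (use legs length_path distinct_path hd_path last_path b_inj in auto)
qed

lemma replace_row_vertices:
  assumes "i < 3" "row_replacement i c R"
  shows "frame_vertices (P(i := R)) \<subseteq> VL"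
proof
  fix x assume "x \<in> frame_vertices (P(i := R))"
  then obtain k l where kl: "k < 3" "l < 3" "x \<in> set ((P(i := R)) k l)"
    unfolding frame_vertices_def by blast
  show "x \<in> VL"
  proof (cases "k = i")
    case True
    then have "x = b l \<or> (\<exists>m<3. x \<in> set (P i m))"
      using row_replacement_vertex[OF assms(2) kl(2), of x] kl(3) by auto
    then show ?thesis using b_in_path set_path_subset_VL assms(1) kl(2) by blast
  next
    case False
    then show ?thesis using kl set_path_subset_VL by auto
  qed
qed

lemma inner_vertex_not_in_replaced:
  assumes "i < 3" "j < 3" "z \<in> set (P i j)" "z \<noteq> a i" "z \<noteq> b j" "\<And>l. l < 3 \<Longrightarrow> z \<notin> set (R l)"
  shows "z \<notin> frame_vertices (P(i := R))"
proof -
  have "z \<notin> set ((P(i := R)) k l)" if "k < 3" "l < 3" for k l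
    using assms that inner_vertex_on_one_path[OF assms(1,2) that] by (cases "k = i") auto
  then show ?thesis unfolding frame_vertices_def by blast
qed

lemma replace_row_better:
  assumes old: "K33_subdivision_in V E VL EL" and ij: "i < 3" "j < 3" and R: "row_replacement i c R"
    and seg: "P i j = A @ x # M @ y # B" "M \<noteq> []" "\<And>l z. \<lbrakk>l < 3; z \<in> set M\<rbrakk> \<Longrightarrow> z \<notin> set (R l)"
    and new_edges: "(\<Union>l<3. path_edges (R l)) \<subseteq> insert e (\<Union>l<3. path_edges (P i l))" "e \<in> E"
    and old_edges: "(\<Union>l<3. path_edges (P i l)) \<subseteq> (\<Union>l<3. path_edges (R l)) \<union> path_edges (x # M @ [y])"
  shows "\<exists>VL' EL'. better_subdivision V E VL EL VL' EL'"
proof -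
  have "better_subdivision V E VL EL (frame_vertices (P(i := R))) (frame_edges (P(i := R)))"
  proof (rule better_subdivisionI[OF old, where e = e and x = x and M = M and y = y])
    show "is_K33_subdivision (frame_vertices (P(i := R))) (frame_edges (P(i := R)))"
      using replace_row[OF ij(1) R] is_K33_subdivision_iff by blast
    show "frame_vertices (P(i := R)) \<subseteq> VL" by (rule replace_row_vertices[OF ij(1) R])
    show "frame_edges (P(i := R)) \<subseteq> insert e EL"
      using frame_edges_replace_row_subset[where P = P, OF ij(1) new_edges(1)] EL_eq by simp
    show "EL \<subseteq> frame_edges (P(i := R)) \<union> path_edges (x # M @ [y])"
      using frame_edges_subset_replace_row[where P = P, OF ij(1) old_edges] EL_eq by simp
    have "distinct (P i j)" using distinct_path[OF ij] .
    then show "distinct (x # M @ [y])" using seg(1) by simp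
    show "path_edges (x # M @ [y]) \<subseteq> EL"
      using path_edges_subset_EL[OF ij] path_edges_infix[of "x # M @ [y]" A B] seg(1) by simp
    have "a i \<in> set (A @ [x])" "b j \<in> set (y # B)"
      using hd_path[OF ij] last_path[OF ij] seg(1) by (cases A; cases B rule: rev_cases; simp)+
    then have "z \<noteq> a i \<and> z \<noteq> b j" if "z \<in> set M" for z
      using that \<open>distinct (P i j)\<close> seg(1) by auto
    then show "set M \<inter> frame_vertices (P(i := R)) = {}"
      using inner_vertex_not_in_replaced[OF ij] seg(1,3) by auto
  qed (fact new_edges seg)+
  then show ?thesis by blast
qed


lemma shortcut_better:
  assumes old: "K33_subdivision_in V E VL EL" and ij: "i < 3" "j < 3"
    and Q: "P i j = A @ x # M @ y # B" and M: "M \<noteq> []" and e: "{x, y} \<in> E"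
  shows "\<exists>VL' EL'. better_subdivision V E VL EL VL' EL'"
proof -
  define R where "R = (P i)(j := A @ x # y # B)"
  have dQ: "distinct (P i j)" using distinct_path[OF ij] .
  have R_sub: "set (R l) \<subseteq> set (P i l)" for l using Q by (auto simp: R_def)
  have "row_replacement i (a i) R"
  proof (rule row_replacementI)
    show "distinct (R l) \<and> 2 \<le> length (R l) \<and> hd (R l) = a i \<and> last (R l) = b l"
      if "l < 3" for l
      using distinct_path[OF ij(1) that] length_path[OF ij(1) that] hd_path[OF ij(1) that]
        last_path[OF ij(1) that] dQ Q by (cases A) (auto simp: R_def)
    show "set (R l) \<inter> set (R l') \<subseteq> {a i}" if "l < 3" "l' < 3" "l \<noteq> l'" for l l'
      using same_row_meet[OF ij(1) that] R_sub by blast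
    show "x = b l \<or> (\<exists>m<3. x \<in> set (P i m) \<and> x \<noteq> b m)" if "l < 3" "x \<in> set (R l)" for l x
      using that R_sub by blast
  qed
  moreover have "z \<notin> set (R l)" if "l < 3" "z \<in> set M" for l z
  proof -
    have "z \<noteq> a i" using that dQ Q hd_path[OF ij] by (cases A) auto
    then show ?thesis
      using that dQ Q same_row_meet[OF ij(1) ij(2) that(1)] by (cases "l = j") (auto simp: R_def)
  qed
  moreover have "path_edges (P i j) = path_edges (A @ [x]) \<union> path_edges (x # M @ [y]) \<union> path_edges (y # B)"
    and "path_edges (R j) = path_edges (A @ [x]) \<union> insert {x, y} (path_edges (y # B))"
    using Q path_edges_split[of A x "M @ y # B"] path_edges_split[of "x # M" y B]
      path_edges_split[of A x "y # B"] by (auto simp: R_def)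
  then have "path_edges (R l) \<subseteq> insert {x, y} (path_edges (P i l))"
    and "path_edges (P i l) \<subseteq> path_edges (R l) \<union> path_edges (x # M @ [y])" for l
    by (auto simp: R_def)
  then have "(\<Union>l<3. path_edges (R l)) \<subseteq> insert {x, y} (\<Union>l<3. path_edges (P i l))"
    and "(\<Union>l<3. path_edges (P i l)) \<subseteq> (\<Union>l<3. path_edges (R l)) \<union> path_edges (x # M @ [y])"
    by blast+
  ultimately show ?thesis
    using replace_row_better[OF old ij _ Q M _ _ e] by blast
qed


context
  fixes i j j' :: nat and Y Z Ms N :: "'a list" and u v :: 'a
  assumes ij: "i < 3" "j < 3" "j' < 3" "j \<noteq> j'"
    and Q1: "P i j = a i # Y @ u # Z" and Q2: "P i j' = a i # Ms @ v # N" and v_not_b: "v \<noteq> b j'"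
begin

text \<open>The essential vertex \<open>a i\<close> moves to \<open>v\<close>; of the old row only the segment
  \<open>a i # Y @ [u]\<close> is lost.\<close>

definition rerouted :: "nat \<Rightarrow> 'a list" where
  "rerouted l = (if l = j then v # u # Z else if l = j' then v # N else v # rev Ms @ P i l)"

lemma reroute_distinct: "distinct (a i # Y @ u # Z)" "distinct (a i # Ms @ v # N)"
  using distinct_path ij Q1 Q2 by metis+

lemma reroute_disjoint:
  shows "set (Y @ u # Z) \<inter> set (Ms @ v # N) = {}"
    and "\<lbrakk>l < 3; l \<noteq> j; l \<noteq> j'\<rbrakk> \<Longrightarrow> set (Y @ u # Z) \<inter> set (tl (P i l)) = {}"
    and "\<lbrakk>l < 3; l \<noteq> j; l \<noteq> j'\<rbrakk> \<Longrightarrow> set (Ms @ v # N) \<inter> set (tl (P i l)) = {}"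
  using row_tails_disjoint[OF ij(1)] ij Q1 Q2 by (metis list.sel(3))+

lemma rerouted_leg:
  assumes l: "l < 3"
  shows "distinct (rerouted l) \<and> 2 \<le> length (rerouted l) \<and> hd (rerouted l) = v \<and> last (rerouted l) = b l"
proof -
  have N: "N \<noteq> []" "last (v # N) = b j'" using Q2 last_path[OF ij(1,3)] v_not_b by auto
  consider "l = j" | "l = j'" | "l \<noteq> j" "l \<noteq> j'" by blast
  then show ?thesis
  proof cases
    case 1
    have "last (u # Z) = b j" using Q1 last_path[OF ij(1,2)] by simp
    then show ?thesis using 1 reroute_distinct(1) reroute_disjoint(1) by (auto simp: rerouted_def)
  next
    case 2
    then show ?thesis using ij(4) reroute_distinct(2) N by (simp add: rerouted_def Suc_le_eq)
  next
    case 3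
    have "v \<notin> set (P i l)" "set Ms \<inter> set (P i l) = {}"
      using set_path_eq_insert_tl[OF ij(1) l] reroute_disjoint(3)[OF l 3] reroute_distinct(2) by auto
    then show ?thesis
      using 3 reroute_distinct(2) distinct_path[OF ij(1) l] last_path[OF ij(1) l] path_ne[OF ij(1) l]
      by (auto simp: rerouted_def Suc_le_eq)
  qed
qed

lemma rerouted_legs_meet:
  assumes "l < 3" "l' < 3" "l \<noteq> l'"
  shows "set (rerouted l) \<inter> set (rerouted l') \<subseteq> {v}"
proof -
  define S where "S m = (if m = j then set (u # Z) else if m = j' then set N
                         else set Ms \<union> insert (a i) (set (tl (P i m))))" for m
  have "set (rerouted m) = insert v (S m)" if "m < 3" for m
    using set_path_eq_insert_tl[OF ij(1) that] by (auto simp: rerouted_def S_def)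
  moreover have "S l \<inter> S l' = {}"
  proof -
    define l3 where "l3 = 3 - j - j'"
    have l3: "l3 < 3" "l3 \<noteq> j" "l3 \<noteq> j'"
      and cases: "l = j \<or> l = j' \<or> l = l3" "l' = j \<or> l' = j' \<or> l' = l3"
      using assms(1,2) ij unfolding l3_def by arith+
    have "S j = set (u # Z)" "S j' = set N" "S l3 = set Ms \<union> insert (a i) (set (tl (P i l3)))"
      using ij(4) l3 by (simp_all add: S_def)
    then have "S j \<inter> S j' = {}" "S j \<inter> S l3 = {}" "S j' \<inter> S l3 = {}"
      using reroute_disjoint(2,3)[OF l3] reroute_disjoint(1) reroute_distinct by auto
    then show ?thesis using cases assms(3) by (auto simp: Int_commute)
  qed
  ultimately show ?thesis using assms(1,2) by auto
qed


lemma rerouted_row: "row_replacement i v rerouted"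
proof (rule row_replacementI)
  show "set (rerouted l) \<inter> set (rerouted l') \<subseteq> {v}" if "l < 3" "l' < 3" "l \<noteq> l'" for l l'
    using rerouted_legs_meet[OF that] .
  show "distinct (rerouted l) \<and> 2 \<le> length (rerouted l) \<and> hd (rerouted l) = v \<and> last (rerouted l) = b l"
    if "l < 3" for l
    using rerouted_leg[OF that] .
  show "x = b l \<or> (\<exists>m<3. x \<in> set (P i m) \<and> x \<noteq> b m)" if l: "l < 3" "x \<in> set (rerouted l)" for l x
  proof -
    have "x \<in> set (P i l) \<or> x \<in> insert v (set Ms)"
      using l Q1 Q2 by (auto simp: rerouted_def split: if_splits)
    moreover have "b j' \<in> set (v # N)" using Q2 last_path[OF ij(1,3)] last_in_set[of "v # N"] by simp
    then have "insert v (set Ms) \<subseteq> set (P i j') - {b j'}"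
      using Q2 v_not_b reroute_distinct(2) by auto
    ultimately show ?thesis using l(1) ij(3) by blast
  qed
qed

lemma rerouted_path_edges:
  shows "path_edges (rerouted j) = insert {u, v} (path_edges (u # Z))"
    and "path_edges (rerouted j') = path_edges (v # N)"
    and "\<lbrakk>l < 3; l \<noteq> j; l \<noteq> j'\<rbrakk> \<Longrightarrow> path_edges (rerouted l) = path_edges (a i # Ms @ [v]) \<union> path_edges (P i l)"
proof -
  show "path_edges (rerouted j) = insert {u, v} (path_edges (u # Z))"
    "path_edges (rerouted j') = path_edges (v # N)"
    using ij(4) by (simp_all add: rerouted_def insert_commute)
  assume l: "l < 3" "l \<noteq> j" "l \<noteq> j'"
  then have "rerouted l = (v # rev Ms) @ a i # tl (P i l)"
    using path_eq_Cons_tl[OF ij(1) l(1)] by (simp add: rerouted_def)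
  then have "path_edges (rerouted l) = path_edges (rev (a i # Ms @ [v])) \<union> path_edges (a i # tl (P i l))"
    using path_edges_split[of "v # rev Ms" "a i" "tl (P i l)"] by simp
  then show "path_edges (rerouted l) = path_edges (a i # Ms @ [v]) \<union> path_edges (P i l)"
    using path_eq_Cons_tl[OF ij(1) l(1)] by (simp only: path_edges_rev)
qed

lemma rerouted_avoids_segment:
  assumes "l < 3" "z \<in> set Y"
  shows "z \<notin> set (rerouted l)"
proof -
  have "z \<notin> set (u # Z)" "z \<noteq> a i" using reroute_distinct(1) assms(2) by auto
  moreover have "z \<notin> set (Ms @ v # N)" using reroute_disjoint(1) assms(2) by auto
  moreover have "z \<notin> set (P i l)" if "l \<noteq> j" "l \<noteq> j'"
    using reroute_disjoint(2)[OF assms(1) that] set_path_eq_insert_tl[OF ij(1) assms(1)] assms(2)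
      \<open>z \<noteq> a i\<close> by auto
  ultimately show ?thesis by (auto simp: rerouted_def)
qed

lemma reroute_better:
  assumes old: "K33_subdivision_in V E VL EL" and Y: "Y \<noteq> []" and e: "{u, v} \<in> E"
  shows "\<exists>VL' EL'. better_subdivision V E VL EL VL' EL'"
proof (rule replace_row_better[OF old ij(1,2) rerouted_row, of "[]" "a i" Y u Z])
  define l3 where "l3 = 3 - j - j'"
  have l3: "l3 < 3" "l3 \<noteq> j" "l3 \<noteq> j'" and third: "\<And>l. l < 3 \<Longrightarrow> l = j \<or> l = j' \<or> l = l3"
    using ij unfolding l3_def by arith+
  have "path_edges (P i j) = path_edges (a i # Y @ [u]) \<union> path_edges (u # Z)"
    and "path_edges (P i j') = path_edges (a i # Ms @ [v]) \<union> path_edges (v # N)"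
    using Q1 Q2 path_edges_split[of "a i # Y" u Z] path_edges_split[of "a i # Ms" v N] by simp_all
  then have new_legs: "path_edges (rerouted j) \<subseteq> insert {u, v} (path_edges (P i j))"
      "path_edges (rerouted j') \<subseteq> path_edges (P i j')"
      "path_edges (rerouted l3) \<subseteq> path_edges (P i j') \<union> path_edges (P i l3)"
    and old_legs: "path_edges (P i j) \<subseteq> path_edges (rerouted j) \<union> path_edges (a i # Y @ [u])"
      "path_edges (P i j') \<subseteq> path_edges (rerouted j') \<union> path_edges (rerouted l3)"
      "path_edges (P i l3) \<subseteq> path_edges (rerouted l3)"
    using rerouted_path_edges(1,2) rerouted_path_edges(3)[OF l3] by auto
  have row_P: "path_edges (P i m) \<subseteq> (\<Union>l<3. path_edges (P i l))"
    and row_R: "path_edges (rerouted m) \<subseteq> (\<Union>l<3. path_edges (rerouted l))" if "m < 3" for m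
    using that by blast+
  show "(\<Union>l<3. path_edges (rerouted l)) \<subseteq> insert {u, v} (\<Union>l<3. path_edges (P i l))"
  proof (rule UN_least)
    show "path_edges (rerouted l) \<subseteq> insert {u, v} (\<Union>l<3. path_edges (P i l))" if "l \<in> {..<3}" for l
      using third[of l] that new_legs row_P[of j] row_P[of j'] row_P[of l3] ij(2,3) l3(1) by blast
  qed
  show "(\<Union>l<3. path_edges (P i l)) \<subseteq> (\<Union>l<3. path_edges (rerouted l)) \<union> path_edges (a i # Y @ [u])"
  proof (rule UN_least)
    show "path_edges (P i l) \<subseteq> (\<Union>l<3. path_edges (rerouted l)) \<union> path_edges (a i # Y @ [u])"
      if "l \<in> {..<3}" for l
      using third[of l] that old_legs row_R[of j] row_R[of j'] row_R[of l3] ij(2,3) l3(1) by blast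
  qed
qed (use Q1 Y rerouted_avoids_segment e in auto)

end

lemma path_chord_better:
  assumes old: "K33_subdivision_in V E VL EL" and ij: "i < 3" "j < 3"
    and xy: "x \<in> set (P i j)" "y \<in> set (P i j)" "x \<noteq> y"
    and e: "{x, y} \<in> E" "{x, y} \<notin> EL"
  shows "\<exists>VL' EL'. better_subdivision V E VL EL VL' EL'"
proof -
  obtain A M B where Q: "P i j = A @ x # M @ y # B \<or> P i j = A @ y # M @ x # B"
    using split_list_pair[OF xy] by blast
  have "M \<noteq> []"
  proof
    assume "M = []"
    then have "{x, y} \<in> path_edges (P i j)"
      using Q path_edges_infix[of "[x, y]" A B] path_edges_infix[of "[y, x]" A B]
      by (auto simp: insert_commute)
    then show False using e(2) path_edges_subset_EL[OF ij] by blast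
  qed
  then show ?thesis
    using Q shortcut_better[OF old ij, of A x M y B] shortcut_better[OF old ij, of A y M x B] e(1)
    by (auto simp: insert_commute)
qed

lemma same_row_edge_better:
  assumes old: "K33_subdivision_in V E VL EL" and tf: "triangle_free E"
    and ij: "i < 3" "j < 3" "j' < 3" "j \<noteq> j'"
    and u: "u \<in> set (P i j)" "u \<noteq> a i" "u \<noteq> b j"
    and v: "v \<in> set (P i j')" "v \<noteq> a i" "v \<noteq> b j'"
    and e: "{u, v} \<in> E"
  shows "\<exists>VL' EL'. better_subdivision V E VL EL VL' EL'"
proof -
  have "u \<in> set (tl (P i j))" "v \<in> set (tl (P i j'))"
    using u v path_eq_Cons_tl[OF ij(1,2)] path_eq_Cons_tl[OF ij(1,3)] by (metis set_ConsD)+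
  then obtain Y Z Ms N where Q1: "P i j = a i # Y @ u # Z" and Q2: "P i j' = a i # Ms @ v # N"
    using path_eq_Cons_tl[OF ij(1,2)] path_eq_Cons_tl[OF ij(1,3)] by (metis split_list)
  consider "Y \<noteq> []" | "Ms \<noteq> []" | "Y = []" "Ms = []" by blast
  then show ?thesis
  proof cases
    case 1
    then show ?thesis using reroute_better[OF ij Q1 Q2 v(3) old _ e] by blast
  next
    case 2
    then show ?thesis
      using reroute_better[OF ij(1,3,2) ij(4)[symmetric] Q2 Q1 u(3) old] e by (simp add: insert_commute)
  next
    case 3
    have "EL \<subseteq> E" using old unfolding K33_subdivision_in_def by blast
    then have "{a i, u} \<in> E" "{a i, v} \<in> E"
      using 3 Q1 Q2 path_edges_subset_EL[OF ij(1,2)] path_edges_subset_EL[OF ij(1,3)] by auto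
    then show ?thesis using tf e unfolding triangle_free_def by (metis insert_commute)
  qed
qed


lemma adjacent_branches_edge_better:
  assumes old: "K33_subdivision_in V E VL EL" and tf: "triangle_free E"
    and p: "is_branch VL EL p" and q: "is_branch VL EL q" and adj: "adjacent_branches p q"
    and u: "u \<in> set p" "\<not> essential VL EL u" and v: "v \<in> set q" "\<not> essential VL EL v"
    and e: "{u, v} \<in> E"
  shows "\<exists>VL' EL'. better_subdivision V E VL EL VL' EL'"
proof -
  interpret transposed: K33_frame b a "\<lambda>i j. rev (P j i)" VL EL by (rule transpose)
  obtain i j where ij: "i < 3" "j < 3" "set p = set (P i j)" "{hd p, last p} = {a i, b j}"
    using branch_cases[OF p] by blast
  obtain i' j' where ij': "i' < 3" "j' < 3" "set q = set (P i' j')" "{hd q, last q} = {a i', b j'}"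
    using branch_cases[OF q] by blast
  have "(i, j) \<noteq> (i', j')" using adj ij(3) ij'(3) unfolding adjacent_branches_def by auto
  moreover have "a i = a i' \<or> b j = b j'"
    using adj ij(4) ij'(4) a_neq_b[OF ij(1) ij'(2)] a_neq_b[OF ij'(1) ij(2)]
    unfolding adjacent_branches_def by auto
  then have "i = i' \<or> j = j'" using a_inj[OF ij(1) ij'(1)] b_inj[OF ij(2) ij'(2)] by blast
  moreover have "u \<noteq> a i" "u \<noteq> b j" "v \<noteq> a i'" "v \<noteq> b j'"
    using u(2) v(2) essential_a ij(1,2) ij'(1,2) essential_b by metis+
  ultimately consider "i = i'" "j \<noteq> j'" | "j = j'" "i \<noteq> i'" by blast
  then show ?thesis
  proof cases
    case 1
    then show ?thesis
      using same_row_edge_better[OF old tf ij(1,2) ij'(2) 1(2)] u v ij ij' e \<open>u \<noteq> a i\<close>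
        \<open>u \<noteq> b j\<close> \<open>v \<noteq> a i'\<close> \<open>v \<noteq> b j'\<close> by auto
  next
    case 2
    then show ?thesis
      using transposed.same_row_edge_better[OF old tf ij(2,1) ij'(1) 2(2)] u v ij ij' e \<open>u \<noteq> a i\<close>
        \<open>u \<noteq> b j\<close> \<open>v \<noteq> a i'\<close> \<open>v \<noteq> b j'\<close> by auto
  qed
qed

end



theorem mainTheorem7:
  fixes V :: "'a set" and E :: "'a set set" and VL :: "'a set" and EL :: "'a set set"
  assumes "simple_graph V E"
    and "triangle_free E"
    and "K33_subdivision_in V E VL EL"
    and "\<forall>VL' EL'. K33_subdivision_in V E VL' EL' \<and> num_bad E VL' EL' \<le> num_bad E VL EL
              \<longrightarrow> card EL \<le> card EL'"
  shows "\<forall>e \<in> bad_edges E VL EL.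
           \<not> (\<exists>p. is_branch VL EL p \<and> e \<subseteq> set p) \<and>
           \<not> (\<exists>u v p q. e = {u, v} \<and> non_essential VL EL u \<and> non_essential VL EL v \<and>
                 is_branch VL EL p \<and> is_branch VL EL q \<and> adjacent_branches p q \<and>
                 u \<in> set p \<and> v \<in> set q)"
proof -
  obtain a b P where "K33_frame a b P VL EL"
    using assms(3) is_K33_subdivision_iff unfolding K33_subdivision_in_def by blast
  then interpret K33_frame a b P VL EL .
  have no_better: "\<not> better_subdivision V E VL EL VL' EL'" for VL' EL'
    using assms(4) unfolding better_subdivision_def by fastforce
  have bad: "e \<in> E" "e \<notin> EL" if "e \<in> bad_edges E VL EL" for e
    using that unfolding bad_edges_def by auto
  show ?thesis
  proof (intro ballI conjI notI; elim exE conjE)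
    fix e p assume e: "e \<in> bad_edges E VL EL" and p: "is_branch VL EL p" "e \<subseteq> set p"
    obtain x y where "e = {x, y}" "x \<noteq> y"
      using assms(1) bad[OF e] unfolding simple_graph_def by blast
    moreover obtain i j where "i < 3" "j < 3" "set p = set (P i j)"
      using branch_cases[OF p(1)] by blast
    ultimately show False
      using path_chord_better[OF assms(3)] p(2) bad[OF e] no_better by auto
  next
    fix e u v p q assume "e \<in> bad_edges E VL EL" "e = {u, v}" "non_essential VL EL u"
      "non_essential VL EL v" "is_branch VL EL p" "is_branch VL EL q" "adjacent_branches p q"
      "u \<in> set p" "v \<in> set q"
    then show False
      using adjacent_branches_edge_better[OF assms(3,2)] bad no_better
      unfolding non_essential_def by blast
  qed
qed

end
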